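(* Let $\tau$ be a $T_1$-topology on $\mathcal{C}(p,q)$ such that $(\mathcal{C}(p,q),\tau)$ is a semitopological semigroup and the maps $\mathcal{C}(p,q)\to E(\mathcal{C}(p,q))$, $x\mapsto xx^{-1}$ and $x\mapsto x^{-1}x$, are continuous. If for some idempotent $q^ip^i$, $i\in\omega$, there exists an open neighbourhood $U$ of $q^ip^i$ in $(\mathcal{C}(p,q),\tau)$ such that $U\cap E(\mathcal{C}(p,q))$ is finite, then $\tau$ is discrete.
   Context: The bicyclic monoid $\mathcal{C}(p,q)$ is the monoid generated by $p,q$ subject only to $pq=1$; elements are uniquely $q^ip^j$, $i,j\in\omega$, with multiplication $q^kp^l\cdot q^mp^n = q^{k-l+m}p^n$ if $l<m$, $=q^kp^n$ if $l=m$, $=q^kp^{l-m+n}$ if $l>m$, and inversion $(q^ip^j)^{-1}=q^jp^i$. $E(\mathcal{C}(p,q))=\{q^ip^i:i\in\omega\}$. Semitopological semigroup: multiplication separately continuous. *)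

theory Defs
  imports "HOL-Analysis.Analysis"
begin

text \<open>The bicyclic monoid C(p,q): the pair (i,j) stands for q^i p^j.\<close>

type_synonym bicyclic = "nat \<times> nat"

fun bc_mult :: "bicyclic \<Rightarrow> bicyclic \<Rightarrow> bicyclic" where
  "bc_mult (k, l) (m, n) =
     (if l < m then (k + m - l, n)
      else if l = m then (k, n)
      else (k, l + n - m))"

fun bc_inv :: "bicyclic \<Rightarrow> bicyclic" where
  "bc_inv (i, j) = (j, i)"

definition bc_idempotents :: "bicyclic set" where
  "bc_idempotents = {(i, i) | i. True}"

definition semitopological_bicyclic :: "bicyclic topology \<Rightarrow> bool" where
  "semitopological_bicyclic T \<longleftrightarrow> topspace T = UNIV \<and>
     (\<forall>a. continuous_map T T (\<lambda>x. bc_mult a x) \<and> continuous_map T T (\<lambda>x. bc_mult x a))"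

end

theory Submission
  imports Defs
begin

text \<open>Removing the finitely many other idempotents from U (finite sets are closed in a
  T1 space) isolates q^i p^i in E(C(p,q)). As q^i p^i is the only x with
  x x^-1 = x^-1 x = q^i p^i, continuity of these two maps isolates it in C(p,q).
  Every equation a x = c or x a = c has only finitely many solutions in C(p,q), so the
  preimage of an isolated point under a translation is a finite open set, all of whose
  points are then isolated. The translations q^m p^n |-> q^i p^m q^m p^n = q^i p^n and
  q^i p^n |-> q^i p^n q^n p^i = q^i p^i thus isolate every point.\<close>

lemma bc_mult_inv_right [simp]: "bc_mult x (bc_inv x) = (fst x, fst x)"
  by (cases x) simp

lemma bc_mult_inv_left [simp]: "bc_mult (bc_inv x) x = (snd x, snd x)"
  by (cases x) simp

lemma finite_bc_mult_left_preimage: "finite {x. bc_mult a x = c}"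
proof -
  obtain k l c1 c2 where a: "a = (k, l)" and c: "c = (c1, c2)" by fastforce
  have "{x. bc_mult a x = c} \<subseteq> {..c1 + l} \<times> {..c2}"
    by (auto simp: a c split: if_splits)
  then show ?thesis by (rule finite_subset) simp
qed

lemma finite_bc_mult_right_preimage: "finite {x. bc_mult x a = c}"
proof -
  obtain m n c1 c2 where a: "a = (m, n)" and c: "c = (c1, c2)" by fastforce
  have "{x. bc_mult x a = c} \<subseteq> {..c1} \<times> {..c2 + m}"
    by (auto simp: a c split: if_splits)
  then show ?thesis by (rule finite_subset) simp
qed

lemma openin_subtopology_singleton_if_finite_trace:
  assumes "t1_space T" "openin T U" "a \<in> U" "a \<in> S" "finite (U \<inter> S)"
  shows "openin (subtopology T S) {a}"
proof -
  have "closedin T (U \<inter> S - {a})"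
    using assms openin_subset by (auto simp: t1_space_closedin_finite)
  with assms(2) have "openin T (U - (U \<inter> S - {a}))"
    by (rule openin_diff)
  moreover have "(U - (U \<inter> S - {a})) \<inter> S = {a}"
    using assms(3,4) by blast
  ultimately show ?thesis
    by (metis openin_subtopology_Int)
qed

lemma openin_singleton_if_finite_preimage:
  assumes "t1_space T" "continuous_map T T' f" "openin T' {f a}" "a \<in> topspace T"
    and "finite {x \<in> topspace T. f x = f a}"
  shows "openin T {a}"
proof -
  define P where "P = {x \<in> topspace T. f x \<in> {f a}}"
  have "openin T P"
    unfolding P_def using assms(2,3) by (rule openin_continuous_map_preimage)
  moreover have "closedin T (P - {a})"
    using assms(1,5) by (auto simp: P_def t1_space_closedin_finite)
  ultimately have "openin T (P - (P - {a}))"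
    by (rule openin_diff)
  moreover have "P - (P - {a}) = {a}"
    using assms(4) by (auto simp: P_def)
  ultimately show ?thesis by simp
qed

lemma openin_idempotent_if_isolated_in_idempotents:
  assumes "topspace T = UNIV"
    and "continuous_map T (subtopology T bc_idempotents) (\<lambda>x. bc_mult x (bc_inv x))"
    and "continuous_map T (subtopology T bc_idempotents) (\<lambda>x. bc_mult (bc_inv x) x)"
    and "openin (subtopology T bc_idempotents) {(i, i)}"
  shows "openin T {(i, i)}"
proof -
  have "openin T {x \<in> topspace T. bc_mult x (bc_inv x) \<in> {(i, i)}}"
    using assms(2,4) by (rule openin_continuous_map_preimage)
  moreover have "openin T {x \<in> topspace T. bc_mult (bc_inv x) x \<in> {(i, i)}}"
    using assms(3,4) by (rule openin_continuous_map_preimage)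
  ultimately have "openin T ({x. fst x = i} \<inter> {x. snd x = i})"
    using assms(1) by (simp add: openin_Int)
  moreover have "{x. fst x = i} \<inter> {x. snd x = i} = {(i, i)}"
    by auto
  ultimately show ?thesis by simp
qed

lemma discrete_if_openin_idempotent:
  assumes "t1_space T" "semitopological_bicyclic T" "openin T {(i, i)}"
  shows "T = discrete_topology UNIV"
proof -
  have top: "topspace T = UNIV"
    and left: "\<And>a. continuous_map T T (bc_mult a)"
    and right: "\<And>a. continuous_map T T (\<lambda>x. bc_mult x a)"
    using assms(2) by (auto simp: semitopological_bicyclic_def)
  have row: "openin T {(i, n)}" for n
    using openin_singleton_if_finite_preimage[OF assms(1) right[of "(n, i)"], of "(i, n)"]
      assms(3) finite_bc_mult_right_preimage top by simp
  have "openin T {(m, n)}" for m n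
    using openin_singleton_if_finite_preimage[OF assms(1) left[of "(i, m)"], of "(m, n)"]
      row finite_bc_mult_left_preimage top by simp
  then have "discrete_topology UNIV = T"
    using top by (auto simp: discrete_topology_unique)
  then show ?thesis ..
qed

theorem lemma3:
  fixes T :: "bicyclic topology"
  assumes "t1_space T"
    and "semitopological_bicyclic T"
    and "continuous_map T (subtopology T bc_idempotents) (\<lambda>x. bc_mult x (bc_inv x))"
    and "continuous_map T (subtopology T bc_idempotents) (\<lambda>x. bc_mult (bc_inv x) x)"
    and "\<exists>i U. openin T U \<and> (i, i) \<in> U \<and> finite (U \<inter> bc_idempotents)"
  shows "T = discrete_topology UNIV"
proof -
  obtain i U where "openin T U" "(i, i) \<in> U" "finite (U \<inter> bc_idempotents)"
    using assms(5) by blast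
  moreover have "(i, i) \<in> bc_idempotents"
    by (simp add: bc_idempotents_def)
  ultimately have "openin (subtopology T bc_idempotents) {(i, i)}"
    using assms(1) by (blast intro: openin_subtopology_singleton_if_finite_trace)
  moreover have "topspace T = UNIV"
    using assms(2) by (simp add: semitopological_bicyclic_def)
  ultimately have "openin T {(i, i)}"
    using assms(3,4) by (blast intro: openin_idempotent_if_isolated_in_idempotents)
  with assms(1,2) show ?thesis
    by (rule discrete_if_openin_idempotent)
qed

end
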